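(* Let $n\in\mathbb{Z}_+$, $\mathbf{a}=(a_n,\dots,a_{2n})\in\mathbb{C}^{n+1}$, $\lambda\in\mathbb{C}^*$, $\alpha\in\mathbb{C}$ and $h\in\mathbb{C}[t]$. Let $\mathfrak{b}_{\lambda,n+1}=\mathrm{span}\{d_k-\lambda^{k-n}d_n\mid k\ge n+1\}\subseteq\mathrm{Vir}$, and let $\mathbb{C}[t]_{\alpha,h,\mathbf{a}}$ be $\mathbb{C}[t]$ with the $\mathfrak{b}_{\lambda,n+1}$-module structure $$(d_k-\lambda^{k-n}d_n)\circ f=(k-n)\lambda^k\big(G(f)-(k+n)\alpha F(f)\big)+(a_k-\lambda^{k-n}a_n)f,\qquad k\ge n+1,$$ where $a_k:=0$ for $k>2n$. Then $\mathbb{C}[t]_{\alpha,h,\mathbf{a}}$ is an irreducible $\mathfrak{b}_{\lambda,n+1}$-module if and only if $\alpha\neq0$ and $\deg(h)=1$.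
   Context: $\mathrm{Vir}$ is the Lie algebra with basis $\{d_i,c\mid i\in\mathbb{Z}\}$ and brackets $[d_i,d_j]=(j-i)d_{i+j}+\delta_{i,-j}\frac{i^3-i}{12}c$, $[c,d_i]=0$; $\mathfrak{b}_{\lambda,n+1}$ is a Lie subalgebra. For $\alpha\in\mathbb{C}$, $h\in\mathbb{C}[t]$, the operators on $\mathbb{C}[t]$ are $F(f)=\frac{h(t)-h(\alpha)}{t-\alpha}f(t)-f'(t)$ and $G(f)=h(\alpha)f+tF(f)$. *)

theory Defs
  imports "HOL-Computational_Algebra.Polynomial"
begin

text \<open>The operators F and G on C[t]. The quotient (h(t) - h(alpha))/(t - alpha)
  is an exact polynomial division.\<close>

definition opF :: "complex \<Rightarrow> complex poly \<Rightarrow> complex poly \<Rightarrow> complex poly" where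
  "opF \<alpha> h f = ((h - [:poly h \<alpha>:]) div [:-\<alpha>, 1:]) * f - pderiv f"

definition opG :: "complex \<Rightarrow> complex poly \<Rightarrow> complex poly \<Rightarrow> complex poly" where
  "opG \<alpha> h f = smult (poly h \<alpha>) f + [:0, 1:] * opF \<alpha> h f"

definition coef_ext :: "nat \<Rightarrow> (nat \<Rightarrow> complex) \<Rightarrow> nat \<Rightarrow> complex" where
  "coef_ext n a k = (if k \<le> 2 * n then a k else 0)"

text \<open>Action of the spanning element d_k - lambda^(k-n) d_n (k >= n+1) on C[t]_{alpha,h,a}.\<close>
definition bact :: "nat \<Rightarrow> complex \<Rightarrow> complex \<Rightarrow> complex poly \<Rightarrow> (nat \<Rightarrow> complex)
    \<Rightarrow> nat \<Rightarrow> complex poly \<Rightarrow> complex poly" where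
  "bact n lam \<alpha> h a k f =
     smult ((of_nat k - of_nat n) * lam ^ k)
       (opG \<alpha> h f - smult ((of_nat k + of_nat n) * \<alpha>) (opF \<alpha> h f))
     + smult (coef_ext n a k - lam ^ (k - n) * coef_ext n a n) f"

text \<open>Submodules: complex subspaces of C[t] stable under all of b_{lambda,n+1};
  since b_{lambda,n+1} is spanned by the elements d_k - lambda^(k-n) d_n, k >= n+1,
  stability under these spanning elements is stability under b_{lambda,n+1}.\<close>
definition b_submodule :: "nat \<Rightarrow> complex \<Rightarrow> complex \<Rightarrow> complex poly \<Rightarrow> (nat \<Rightarrow> complex)
    \<Rightarrow> complex poly set \<Rightarrow> bool" where
  "b_submodule n lam \<alpha> h a W \<longleftrightarrow>
     0 \<in> W \<and> (\<forall>f\<in>W. \<forall>g\<in>W. f + g \<in> W) \<and> (\<forall>c. \<forall>f\<in>W. smult c f \<in> W) \<and>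
     (\<forall>k \<ge> n + 1. \<forall>f\<in>W. bact n lam \<alpha> h a k f \<in> W)"

definition b_irreducible :: "nat \<Rightarrow> complex \<Rightarrow> complex \<Rightarrow> complex poly \<Rightarrow> (nat \<Rightarrow> complex) \<Rightarrow> bool" where
  "b_irreducible n lam \<alpha> h a \<longleftrightarrow>
     (UNIV :: complex poly set) \<noteq> {0} \<and>
     (\<forall>W. b_submodule n lam \<alpha> h a W \<longrightarrow> W = {0} \<or> W = UNIV)"

end

theory Submission
  imports Defs
begin

text \<open>For \<open>k > 2n\<close> the action of \<open>d\<^sub>k - \<lambda>\<^bsup>k-n\<^esup> d\<^sub>n\<close>, divided by \<open>\<lambda>\<^sup>k\<close>, is
  \<open>(k - n) G - (k\<^sup>2 - n\<^sup>2) \<alpha> F - a\<^sub>n / \<lambda>\<^sup>n\<close>, a quadratic polynomial in \<open>k\<close>; its second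
  difference in \<open>k\<close> is \<open>-2\<alpha>F\<close>. So for \<open>\<alpha> \<noteq> 0\<close> the submodules are exactly the subspaces
  stable under \<open>F\<close> and \<open>G\<close>. If \<open>deg h = 1\<close> then \<open>F = c - d/dt\<close> with \<open>c \<noteq> 0\<close>: a nonzero
  stable subspace contains \<open>1\<close> (differentiate) and then every \<open>t\<^sup>m\<close> (apply \<open>tF = G - h(\<alpha>)\<close>).
  Conversely, \<open>tC[t]\<close> is a proper submodule when \<open>\<alpha> = 0\<close>, the constants form one when \<open>h\<close> is
  constant, and so does the image of \<open>F\<close> when \<open>deg h \<ge> 2\<close>, because then \<open>F\<close> raises degrees
  and misses \<open>1\<close>.\<close>

interpretation poly_vs: vector_space "smult :: complex \<Rightarrow> complex poly \<Rightarrow> complex poly"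
  by unfold_locales (simp_all add: smult_add_right smult_add_left)

lemma b_submodule_iff:
  "b_submodule n lam \<alpha> h a W \<longleftrightarrow>
     poly_vs.subspace W \<and> (\<forall>k \<ge> n + 1. \<forall>f\<in>W. bact n lam \<alpha> h a k f \<in> W)"
  by (simp add: b_submodule_def poly_vs.subspace_def)

lemma not_b_irreducibleI:
  assumes "b_submodule n lam \<alpha> h a W" "f \<in> W" "f \<noteq> 0" "g \<notin> W"
  shows "\<not> b_irreducible n lam \<alpha> h a"
  using assms unfolding b_irreducible_def by blast

lemma module_hom_opF: "module_hom smult smult (opF \<alpha> h)"
  by unfold_locales (simp_all add: opF_def pderiv_add pderiv_smult algebra_simps)

lemma module_hom_pderiv: "module_hom smult smult (pderiv :: complex poly \<Rightarrow> complex poly)"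
  by unfold_locales (simp_all add: pderiv_add pderiv_smult)

lemma module_hom_x_mult: "module_hom smult smult (\<lambda>g :: complex poly. [:0, 1:] * g)"
  by unfold_locales (simp_all add: algebra_simps)

definition divided_diff :: "complex \<Rightarrow> complex poly \<Rightarrow> complex poly" where
  "divided_diff \<alpha> h = (h - [:poly h \<alpha>:]) div [:-\<alpha>, 1:]"

lemma opF_eq: "opF \<alpha> h f = divided_diff \<alpha> h * f - pderiv f"
  by (simp add: opF_def divided_diff_def)

lemma linear_mult_divided_diff: "[:-\<alpha>, 1:] * divided_diff \<alpha> h = h - [:poly h \<alpha>:]"
proof -
  have "[:-\<alpha>, 1:] dvd h - [:poly h \<alpha>:]"
    using poly_eq_0_iff_dvd[of "h - [:poly h \<alpha>:]" \<alpha>] by simp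
  then show ?thesis unfolding divided_diff_def by (rule dvd_mult_div_cancel)
qed

lemma divided_diff_degree_0:
  assumes "degree h = 0"
  shows "divided_diff \<alpha> h = 0"
proof -
  obtain c where "h = [:c:]"
    using assms by (metis degree_0_id)
  then have "[:-\<alpha>, 1:] * divided_diff \<alpha> h = 0"
    by (simp only: linear_mult_divided_diff) simp
  then show ?thesis by (simp del: mult_pCons_left)
qed

lemma degree_lead_coeff_divided_diff:
  assumes "degree h \<ge> 1"
  shows "degree (divided_diff \<alpha> h) = degree h - 1 \<and> lead_coeff (divided_diff \<alpha> h) = lead_coeff h"
proof -
  have deg: "degree (h - [:poly h \<alpha>:]) = degree h"
    using assms degree_add_eq_left[of "[:- poly h \<alpha>:]" h] by (simp add: diff_conv_add_uminus)
  moreover have lc: "lead_coeff (h - [:poly h \<alpha>:]) = lead_coeff h"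
    using assms deg by (simp add: coeff_pCons split: nat.split)
  moreover have "divided_diff \<alpha> h \<noteq> 0"
    using deg assms linear_mult_divided_diff[of \<alpha> h] by auto
  then have "degree ([:-\<alpha>, 1:] * divided_diff \<alpha> h) = 1 + degree (divided_diff \<alpha> h)"
    using degree_mult_eq[of "[:-\<alpha>, 1:]" "divided_diff \<alpha> h"] by (simp del: mult_pCons_left)
  moreover have "lead_coeff ([:-\<alpha>, 1:] * divided_diff \<alpha> h) = lead_coeff (divided_diff \<alpha> h)"
    by (simp only: lead_coeff_mult) simp
  ultimately show ?thesis
    unfolding linear_mult_divided_diff by simp
qed

lemma opF_degree_1:
  assumes "degree h = 1"
  shows "opF \<alpha> h f = smult (lead_coeff h) f - pderiv f"
proof -
  have "degree (divided_diff \<alpha> h) = 0" "coeff (divided_diff \<alpha> h) 0 = lead_coeff h"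
    using degree_lead_coeff_divided_diff[of h \<alpha>] assms by auto
  then have "divided_diff \<alpha> h = [:lead_coeff h:]"
    by (metis degree_0_id)
  then show ?thesis by (simp add: opF_eq)
qed

lemma x_mult_opF: "[:0, 1:] * opF \<alpha> h f = opF \<alpha> h ([:0, 1:] * f) + f"
  by (simp add: opF_def pderiv_mult pderiv_pCons algebra_simps)

lemma bact_eq:
  "bact n lam \<alpha> h a k f =
     smult ((of_nat k - of_nat n) * lam ^ k) (opG \<alpha> h f)
     - smult ((of_nat k - of_nat n) * (of_nat k + of_nat n) * lam ^ k) (smult \<alpha> (opF \<alpha> h f))
     + smult (coef_ext n a k - lam ^ (k - n) * coef_ext n a n) f"
  by (simp add: bact_def smult_diff_right algebra_simps)

text \<open>Stated with \<open>\<alpha>F\<close> rather than \<open>F\<close> so that it also covers \<open>\<alpha> = 0\<close>, where \<open>W\<close> need not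
  be \<open>F\<close>-stable.\<close>

lemma b_submoduleI_stable:
  assumes W: "poly_vs.subspace W"
    and G: "\<And>f. f \<in> W \<Longrightarrow> opG \<alpha> h f \<in> W"
    and F: "\<And>f. f \<in> W \<Longrightarrow> smult \<alpha> (opF \<alpha> h f) \<in> W"
  shows "b_submodule n lam \<alpha> h a W"
  unfolding b_submodule_iff bact_eq
  by (intro conjI W allI impI ballI poly_vs.subspace_add[OF W] poly_vs.subspace_diff[OF W]
      poly_vs.subspace_scale[OF W] G F)

lemma bact_above_2n:
  assumes "lam \<noteq> 0" "k > 2 * n"
  shows "smult (1 / lam ^ k) (bact n lam \<alpha> h a k f) =
     smult (of_nat k - of_nat n) (opG \<alpha> h f)
     - smult ((of_nat k - of_nat n) * (of_nat k + of_nat n) * \<alpha>) (opF \<alpha> h f)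
     - smult (a n / lam ^ n) f"
proof -
  define X where "X = opG \<alpha> h f - smult ((of_nat k + of_nat n) * \<alpha>) (opF \<alpha> h f)"
  have "coef_ext n a k = 0" "coef_ext n a n = a n"
    using assms by (simp_all add: coef_ext_def)
  then have "bact n lam \<alpha> h a k f =
      smult ((of_nat k - of_nat n) * lam ^ k) X - smult (lam ^ (k - n) * a n) f"
    by (simp add: bact_def X_def)
  moreover have "1 / lam ^ k * (lam ^ (k - n) * a n) = a n / lam ^ n"
    using assms by (simp add: power_diff)
  ultimately have "smult (1 / lam ^ k) (bact n lam \<alpha> h a k f) =
      smult (of_nat k - of_nat n) X - smult (a n / lam ^ n) f"
    using assms by (simp add: smult_diff_right)
  then show ?thesis
    by (simp add: X_def smult_diff_right algebra_simps)
qed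

lemma opF_second_difference:
  assumes "lam \<noteq> 0"
  shows "smult (-2 * \<alpha>) (opF \<alpha> h f) =
     smult (1 / lam ^ (2 * n + 1)) (bact n lam \<alpha> h a (2 * n + 1) f)
     - smult 2 (smult (1 / lam ^ (2 * n + 2)) (bact n lam \<alpha> h a (2 * n + 2) f))
     + smult (1 / lam ^ (2 * n + 3)) (bact n lam \<alpha> h a (2 * n + 3) f)"
proof -
  have k: "2 * n < 2 * n + 1" "2 * n < 2 * n + 2" "2 * n < 2 * n + 3" by simp_all
  have two: "p * 2 = smult 2 p" for p :: "complex poly"
    by (simp add: numeral_mult_conv_smult[symmetric])
  show ?thesis
    unfolding bact_above_2n[OF assms k(1)] bact_above_2n[OF assms k(2)]
      bact_above_2n[OF assms k(3)]
    by (intro poly_eqI) (simp add: coeff_diff algebra_simps two numeral_mult_conv_smult)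
qed

lemma opG_from_bact:
  assumes "lam \<noteq> 0"
  shows "smult (of_nat n + 1) (opG \<alpha> h f) =
     smult (1 / lam ^ (2 * n + 1)) (bact n lam \<alpha> h a (2 * n + 1) f)
     + smult ((of_nat n + 1) * (3 * of_nat n + 1) * \<alpha>) (opF \<alpha> h f) + smult (a n / lam ^ n) f"
proof -
  have k: "2 * n < 2 * n + 1" by simp
  show ?thesis
    unfolding bact_above_2n[OF assms k] by (intro poly_eqI) (simp add: coeff_diff algebra_simps)
qed

lemma b_submodule_closed_opF_opG:
  assumes lam: "lam \<noteq> 0" and \<alpha>: "\<alpha> \<noteq> 0" and "b_submodule n lam \<alpha> h a W" and f: "f \<in> W"
  shows "opF \<alpha> h f \<in> W" and "opG \<alpha> h f \<in> W"
proof -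
  have W: "poly_vs.subspace W"
    and act: "\<And>k g. n + 1 \<le> k \<Longrightarrow> g \<in> W \<Longrightarrow> bact n lam \<alpha> h a k g \<in> W"
    using assms(3) by (simp_all add: b_submodule_iff)
  note closure = poly_vs.subspace_add[OF W] poly_vs.subspace_diff[OF W] poly_vs.subspace_scale[OF W]
  have "smult (-2 * \<alpha>) (opF \<alpha> h f) \<in> W"
    unfolding opF_second_difference[OF lam, where n = n and a = a] by (intro closure act f) simp_all
  from poly_vs.subspace_scale[OF W this, of "1 / (-2 * \<alpha>)"] \<alpha>
  show F: "opF \<alpha> h f \<in> W" by simp
  have "smult (of_nat n + 1) (opG \<alpha> h f) \<in> W"
    unfolding opG_from_bact[OF lam, where a = a] by (intro closure act f F) simp
  moreover have "(of_nat n + 1 :: complex) \<noteq> 0"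
    by (metis of_nat_Suc of_nat_eq_0_iff Zero_not_Suc add.commute)
  ultimately show "opG \<alpha> h f \<in> W"
    using poly_vs.subspace_scale[OF W, of _ "1 / (of_nat n + 1)"] by force
qed

lemma one_mem_if_pderiv_closed:
  assumes W: "poly_vs.subspace W" and D: "\<And>g. g \<in> W \<Longrightarrow> pderiv g \<in> W"
    and "f \<in> W" "f \<noteq> 0"
  shows "1 \<in> W"
  using assms(3,4)
proof (induction "degree f" arbitrary: f rule: less_induct)
  case less
  show ?case
  proof (cases "degree f = 0")
    case True
    then obtain c where "f = [:c:]" by (metis degree_0_id)
    with less.prems have "smult (1 / c) f = 1" by (simp add: one_pCons)
    with poly_vs.subspace_scale[OF W less.prems(1)] show ?thesis by metis
  next
    case False
    then have "pderiv f \<noteq> 0" "degree (pderiv f) < degree f"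
      by (simp_all add: pderiv_eq_0_iff degree_pderiv)
    with less D show ?thesis by blast
  qed
qed

lemma x_mult_pderiv_monom:
  "[:0, 1:] * pderiv (monom 1 m) = smult (of_nat m) (monom (1 :: complex) m)"
proof (cases m)
  case (Suc k)
  have "pderiv (monom (1::complex) m) = monom (of_nat m) k" by (simp only: pderiv_monom Suc) simp
  then show ?thesis by (simp add: smult_monom monom_Suc Suc)
qed (simp add: pderiv_monom)

lemma subspace_eq_UNIV_if_raising:
  assumes W: "poly_vs.subspace W" and "1 \<in> W" "c \<noteq> 0"
    and R: "\<And>f. f \<in> W \<Longrightarrow> [:0, 1:] * (smult c f - pderiv f) \<in> W"
  shows "W = UNIV"
proof -
  have monom: "monom 1 m \<in> W" for m
  proof (induction m)
    case 0
    then show ?case using \<open>1 \<in> W\<close> by (simp add: monom_0 one_pCons)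
  next
    case (Suc m)
    have "[:0, 1:] * (smult c (monom 1 m) - pderiv (monom 1 m))
        = smult c ([:0, 1:] * monom 1 m) - smult (of_nat m) (monom 1 m)"
      by (simp only: right_diff_distrib x_mult_pderiv_monom mult_smult_right)
    also have "[:0, 1:] * monom (1 :: complex) m = monom 1 (Suc m)"
      by (simp add: monom_Suc)
    finally have "monom 1 (Suc m) = smult (1 / c)
        ([:0, 1:] * (smult c (monom 1 m) - pderiv (monom 1 m)) + smult (of_nat m) (monom 1 m))"
      using \<open>c \<noteq> 0\<close> by simp
    also have "\<dots> \<in> W"
      by (intro poly_vs.subspace_scale[OF W] poly_vs.subspace_add[OF W] R Suc.IH)
    finally show ?case .
  qed
  have "p \<in> W" for p
  proof -
    have "p = (\<Sum>i\<le>degree p. smult (coeff p i) (monom 1 i))"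
      by (simp add: smult_monom poly_as_sum_of_monoms)
    also have "\<dots> \<in> W"
      by (intro poly_vs.subspace_sum[OF W] poly_vs.subspace_scale[OF W] monom)
    finally show ?thesis .
  qed
  then show ?thesis by blast
qed

lemma b_irreducible_if_degree_1:
  assumes lam: "lam \<noteq> 0" and \<alpha>: "\<alpha> \<noteq> 0" and h: "degree h = 1"
  shows "b_irreducible n lam \<alpha> h a"
  unfolding b_irreducible_def
proof (intro conjI allI impI)
  show "(UNIV :: complex poly set) \<noteq> {0}" by (metis singletonD UNIV_I one_neq_zero)
next
  fix W assume sm: "b_submodule n lam \<alpha> h a W"
  then have W: "poly_vs.subspace W" by (simp add: b_submodule_iff)
  note F = b_submodule_closed_opF_opG(1)[OF lam \<alpha> sm]
    and G = b_submodule_closed_opF_opG(2)[OF lam \<alpha> sm]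
  define c where "c = lead_coeff h"
  have "h \<noteq> 0" using h by auto
  then have c: "c \<noteq> 0" by (simp add: c_def)
  have opF: "opF \<alpha> h f = smult c f - pderiv f" for f
    using opF_degree_1[OF h] by (simp add: c_def)
  show "W = {0} \<or> W = UNIV"
  proof (cases "W = {0}")
    case False
    then obtain f where f: "f \<in> W" "f \<noteq> 0"
      using poly_vs.subspace_0[OF W] by blast
    have "pderiv g \<in> W" if "g \<in> W" for g
    proof -
      have "pderiv g = smult c g - opF \<alpha> h g" by (simp add: opF)
      then show ?thesis
        using that by (simp add: poly_vs.subspace_diff[OF W] poly_vs.subspace_scale[OF W] F)
    qed
    then have "1 \<in> W" by (rule one_mem_if_pderiv_closed[OF W _ f])
    moreover have "[:0, 1:] * (smult c g - pderiv g) \<in> W" if "g \<in> W" for g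
    proof -
      have "[:0, 1:] * (smult c g - pderiv g) = opG \<alpha> h g - smult (poly h \<alpha>) g"
        by (simp add: opG_def opF)
      then show ?thesis
        using that by (simp add: poly_vs.subspace_diff[OF W] poly_vs.subspace_scale[OF W] G)
    qed
    ultimately show ?thesis using subspace_eq_UNIV_if_raising[OF W _ c] by blast
  qed simp
qed

lemma b_submodule_range_x_mult: "b_submodule n lam 0 h a (range (\<lambda>g. [:0, 1:] * g))"
proof (rule b_submoduleI_stable)
  show "poly_vs.subspace (range (\<lambda>g. [:0, 1:] * g))"
    by (rule module_hom.subspace_image[OF module_hom_x_mult poly_vs.subspace_UNIV])
  fix f :: "complex poly" assume "f \<in> range (\<lambda>g. [:0, 1:] * g)"
  then show "opG 0 h f \<in> range (\<lambda>g. [:0, 1:] * g)"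
    unfolding opG_def by (auto simp: mult_smult_right[symmetric] distrib_left[symmetric])
qed auto

lemma b_submodule_constants:
  assumes "degree h = 0"
  shows "b_submodule n lam \<alpha> h a {f. pderiv f = 0}"
proof (rule b_submoduleI_stable)
  show "poly_vs.subspace {f. pderiv f = 0}"
    by (rule module_hom.subspace_kernel[OF module_hom_pderiv])
  have F: "opF \<alpha> h f = 0" if "pderiv f = 0" for f
    using that assms by (simp add: opF_eq divided_diff_degree_0)
  fix f :: "complex poly" assume "f \<in> {f. pderiv f = 0}"
  then show "opG \<alpha> h f \<in> {f. pderiv f = 0}" "smult \<alpha> (opF \<alpha> h f) \<in> {f. pderiv f = 0}"
    by (simp_all add: opG_def F pderiv_smult)
qed

lemma b_submodule_range_opF: "b_submodule n lam \<alpha> h a (range (opF \<alpha> h))"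
proof (rule b_submoduleI_stable)
  interpret F: module_hom smult smult "opF \<alpha> h" by (rule module_hom_opF)
  show "poly_vs.subspace (range (opF \<alpha> h))"
    by (rule F.subspace_image[OF poly_vs.subspace_UNIV])
  fix f :: "complex poly" assume "f \<in> range (opF \<alpha> h)"
  then obtain g where f: "f = opF \<alpha> h g" by blast
  have "opG \<alpha> h f = opF \<alpha> h (smult (poly h \<alpha>) g + [:0, 1:] * opF \<alpha> h g + g)"
    unfolding f opG_def x_mult_opF by (simp only: F.add F.scale add.assoc)
  then show "opG \<alpha> h f \<in> range (opF \<alpha> h)" by simp
  show "smult \<alpha> (opF \<alpha> h f) \<in> range (opF \<alpha> h)"
    by (metis F.scale rangeI)
qed

lemma one_notin_range_opF:
  assumes "degree h \<ge> 2"
  shows "1 \<notin> range (opF \<alpha> h)"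
proof
  assume "1 \<in> range (opF \<alpha> h)"
  then obtain g where g: "divided_diff \<alpha> h * g - pderiv g = 1" by (auto simp: opF_eq)
  define q where "q = divided_diff \<alpha> h"
  have q: "q \<noteq> 0" "degree q \<ge> 1"
    using degree_lead_coeff_divided_diff[of h \<alpha>] assms by (auto simp: q_def)
  have "g \<noteq> 0" using g by auto
  then have "degree (q * g) = degree q + degree g" using q by (simp add: degree_mult_eq)
  moreover have "degree (pderiv g) < degree (q * g)"
    using q calculation by (simp add: degree_pderiv)
  ultimately have "degree (q * g - pderiv g) = degree q + degree g"
    by (metis degree_add_eq_left degree_minus diff_conv_add_uminus)
  with g q show False by (simp add: q_def)
qed

lemma b_irreducible_imp_degree_1:
  assumes irr: "b_irreducible n lam \<alpha> h a"
  shows "\<alpha> \<noteq> 0 \<and> degree h = 1"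
proof (intro conjI)
  show "\<alpha> \<noteq> 0"
  proof
    assume "\<alpha> = 0"
    have "b_submodule n lam \<alpha> h a (range (\<lambda>g. [:0, 1:] * g))"
      using b_submodule_range_x_mult \<open>\<alpha> = 0\<close> by simp
    moreover have "[:0, 1:] \<in> range (\<lambda>g :: complex poly. [:0, 1:] * g)"
      by (metis mult.right_neutral rangeI)
    moreover have "[:0, 1:] \<noteq> (0 :: complex poly)" by simp
    moreover have "(1 :: complex poly) \<notin> range (\<lambda>g. [:0, 1:] * g)"
      by (auto simp: one_pCons)
    ultimately have "\<not> b_irreducible n lam \<alpha> h a" by (rule not_b_irreducibleI)
    with irr show False by contradiction
  qed
  have "degree h \<noteq> 0"
  proof
    assume "degree h = 0"
    then have "b_submodule n lam \<alpha> h a {f. pderiv f = 0}" by (rule b_submodule_constants)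
    moreover have "1 \<in> {f. pderiv f = 0}" "(1 :: complex poly) \<noteq> 0" "[:0, 1:] \<notin> {f. pderiv f = 0}"
      by (simp_all add: pderiv_pCons)
    ultimately have "\<not> b_irreducible n lam \<alpha> h a" by (rule not_b_irreducibleI)
    with irr show False by contradiction
  qed
  moreover have "\<not> degree h \<ge> 2"
  proof
    assume h: "degree h \<ge> 2"
    have "opF \<alpha> h 1 \<noteq> 0"
      using degree_lead_coeff_divided_diff[of h \<alpha>] h by (auto simp: opF_eq)
    then have "\<not> b_irreducible n lam \<alpha> h a"
      by (rule not_b_irreducibleI[OF b_submodule_range_opF rangeI _ one_notin_range_opF[OF h]])
    with irr show False by contradiction
  qed
  ultimately show "degree h = 1" by linarith
qed

theorem proposition5p1:
  fixes n :: nat and a :: "nat \<Rightarrow> complex" and lam \<alpha> :: complex and h :: "complex poly"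
  assumes "n \<ge> 1" and "lam \<noteq> 0"
  shows "b_irreducible n lam \<alpha> h a \<longleftrightarrow> (\<alpha> \<noteq> 0 \<and> degree h = 1)"
  using b_irreducible_imp_degree_1 b_irreducible_if_degree_1[OF assms(2)] by blast

end
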